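(* Let $M_t=(-1,1)\times(-1,0)$ with coordinates $(u,v)$ and metric $g_t=-\Omega^2(du\otimes dv+dv\otimes du)$, $\Omega$ smooth and strictly positive, with $\partial_u$ future directed null. Let $\gamma:[0,1]\to M_t$ be a locally Lipschitz future directed causal curve and let $p\in J^+(\gamma(0),M_t)\cap J^-(\gamma(1),M_t)$. Then there exists a causal homotopy $\Gamma:[0,1]\times[0,1]\to M_t$ of $\gamma$ with fixed endpoints such that $p=\Gamma(s;\lambda)$ for some $(s,\lambda)\in[0,1]\times[0,1]$.
   Context: $J^\pm(q,M_t)$ is the set of points reachable from $q$ by a future/past directed locally Lipschitz causal curve. A causal homotopy of $\gamma$ with fixed endpoints is a continuous map $\Gamma:[0,1]\times[0,1]\to M_t$, $(s,\lambda)\mapsto\Gamma(s;\lambda)$, such that $\Gamma(\cdot;0)=\gamma$ and, for each $\lambda$, $s\mapsto\Gamma(s;\lambda)$ is a future directed locally Lipschitz causal curve from $\gamma(0)$ to $\gamma(1)$. *)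

theory Defs
  imports "HOL-Analysis.Analysis"
begin

type_synonym pt = "real \<times> real"  (* coordinates (u,v) *)

definition Mt :: "pt set" where
  "Mt = {-1<..<1} \<times> {-1<..<0}"

(* C^infinity on an open set S of R^2: there is a family of functions containing f,
   each continuous on S and Frechet differentiable on S with both partial
   derivatives again in the family *)
definition smooth2_on :: "pt set \<Rightarrow> (pt \<Rightarrow> real) \<Rightarrow> bool" where
  "smooth2_on S f \<longleftrightarrow> (\<exists>F. f \<in> F \<and> (\<forall>g\<in>F. continuous_on S g \<and>
      (\<exists>gu\<in>F. \<exists>gv\<in>F. \<forall>x\<in>S.
         (g has_derivative (\<lambda>h. fst h * gu x + snd h * gv x)) (at x))))"

definition gt :: "(pt \<Rightarrow> real) \<Rightarrow> pt \<Rightarrow> pt \<Rightarrow> pt \<Rightarrow> real" where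
  "gt \<Omega> x X Y = - (\<Omega> x)\<^sup>2 * (fst X * snd Y + snd X * fst Y)"

(* time orientation: the timelike field T = \<partial>_u + \<partial>_v, which lies in the same cone as
   the future directed null vector \<partial>_u (gt(\<partial>_u,T) < 0). *)
definition fd_causal_vec :: "(pt \<Rightarrow> real) \<Rightarrow> pt \<Rightarrow> pt \<Rightarrow> bool" where
  "fd_causal_vec \<Omega> x X \<longleftrightarrow> X \<noteq> 0 \<and> gt \<Omega> x X X \<le> 0 \<and> gt \<Omega> x X (1, 1) < 0"

definition fd_causal_curve :: "(pt \<Rightarrow> real) \<Rightarrow> real \<Rightarrow> real \<Rightarrow> (real \<Rightarrow> pt) \<Rightarrow> bool" where
  "fd_causal_curve \<Omega> a b c \<longleftrightarrow> a \<le> b \<and> c ` {a..b} \<subseteq> Mt \<and>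
     (\<forall>s\<in>{a..b}. \<exists>e>0. \<exists>L. L-lipschitz_on ({a..b} \<inter> cball s e) c) \<and>
     (AE s in lebesgue. s \<in> {a..b} \<longrightarrow>
        (\<exists>d. (c has_vector_derivative d) (at s) \<and> fd_causal_vec \<Omega> (c s) d))"

definition Jplus :: "(pt \<Rightarrow> real) \<Rightarrow> pt \<Rightarrow> pt set" where
  "Jplus \<Omega> q = {p. \<exists>a b c. fd_causal_curve \<Omega> a b c \<and> c a = q \<and> c b = p}"

definition Jminus :: "(pt \<Rightarrow> real) \<Rightarrow> pt \<Rightarrow> pt set" where
  "Jminus \<Omega> q = {p. \<exists>a b c. fd_causal_curve \<Omega> a b c \<and> c a = p \<and> c b = q}"

definition causal_homotopy :: "(pt \<Rightarrow> real) \<Rightarrow> (real \<Rightarrow> pt) \<Rightarrow> (real \<Rightarrow> real \<Rightarrow> pt) \<Rightarrow> bool" where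
  "causal_homotopy \<Omega> \<gamma> \<Gamma> \<longleftrightarrow>
     continuous_on ({0..1} \<times> {0..1}) (\<lambda>(s, l). \<Gamma> s l) \<and>
     (\<forall>s\<in>{0..1}. \<forall>l\<in>{0..1}. \<Gamma> s l \<in> Mt) \<and>
     (\<forall>s\<in>{0..1}. \<Gamma> s 0 = \<gamma> s) \<and>
     (\<forall>l\<in>{0..1}. fd_causal_curve \<Omega> 0 1 (\<lambda>s. \<Gamma> s l) \<and>
        \<Gamma> 0 l = \<gamma> 0 \<and> \<Gamma> 1 l = \<gamma> 1)"

end

theory Submission
  imports Defs
begin

text \<open>Since \<open>\<Omega> > 0\<close>, a vector is future directed causal iff it lies in the closed first
  quadrant minus the origin, a convex cone that does not depend on \<open>\<Omega>\<close>. Concatenating the curves that witness \<open>p \<in> J\<^sup>+ \<inter> J\<^sup>-\<close> gives a causal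
  curve \<open>\<sigma>\<close> from \<open>\<gamma>(0)\<close> through \<open>p\<close> to \<open>\<gamma>(1)\<close>. As both \<open>M\<^sub>t\<close> and the cone are convex, every
  curve \<open>(1 - \<lambda>) \<gamma> + \<lambda> \<sigma>\<close> of the straight-line homotopy is again causal, and the last one
  passes through \<open>p\<close>.\<close>

definition future_cone :: "pt set" where
  "future_cone = {X. 0 \<le> fst X \<and> 0 \<le> snd X} - {0}"

lemma fd_causal_vec_iff_future_cone:
  assumes "\<Omega> x \<noteq> 0"
  shows "fd_causal_vec \<Omega> x X \<longleftrightarrow> X \<in> future_cone"
proof -
  obtain X1 X2 where X: "X = (X1, X2)" by (cases X)
  have w: "(\<Omega> x)\<^sup>2 > 0" using assms by simp
  have "gt \<Omega> x X X = - ((2 * (\<Omega> x)\<^sup>2) * (X1 * X2))"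
    by (simp add: gt_def X algebra_simps)
  then have "gt \<Omega> x X X \<le> 0 \<longleftrightarrow> 0 \<le> X1 * X2"
    using w by (simp only: neg_le_0_iff_le zero_le_mult_iff) auto
  moreover have "gt \<Omega> x X (1, 1) = - ((\<Omega> x)\<^sup>2 * (X1 + X2))"
    by (simp add: gt_def X algebra_simps)
  then have "gt \<Omega> x X (1, 1) < 0 \<longleftrightarrow> 0 < X1 + X2"
    using w by (simp only: neg_less_0_iff_less zero_less_mult_iff) auto
  moreover have "0 \<le> X1 * X2 \<and> 0 < X1 + X2 \<longleftrightarrow> 0 \<le> X1 \<and> 0 \<le> X2 \<and> \<not> (X1 = 0 \<and> X2 = 0)"
    by (auto simp: zero_le_mult_iff)
  ultimately show ?thesis
    by (auto simp: fd_causal_vec_def future_cone_def X zero_prod_def)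
qed

lemma future_cone_scaleR: "0 < k \<Longrightarrow> X \<in> future_cone \<Longrightarrow> k *\<^sub>R X \<in> future_cone"
  by (auto simp: future_cone_def)

lemma convex_future_cone: "convex future_cone"
proof (rule convexI)
  fix X Y :: pt and u v :: real
  assume X: "X \<in> future_cone" and Y: "Y \<in> future_cone" and uv: "0 \<le> u" "0 \<le> v" "u + v = 1"
  have "0 \<le> fst (u *\<^sub>R X + v *\<^sub>R Y)" "0 \<le> snd (u *\<^sub>R X + v *\<^sub>R Y)"
    using X Y uv by (auto simp: future_cone_def)
  moreover have "u *\<^sub>R X + v *\<^sub>R Y \<noteq> 0"
  proof
    assume "u *\<^sub>R X + v *\<^sub>R Y = 0"
    then have "u *\<^sub>R X = 0 \<and> v *\<^sub>R Y = 0"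
      using X Y uv by (cases X, cases Y) (auto simp: future_cone_def zero_prod_def add_nonneg_eq_0_iff)
    then show False using X Y uv by (auto simp: future_cone_def)
  qed
  ultimately show "u *\<^sub>R X + v *\<^sub>R Y \<in> future_cone" by (simp add: future_cone_def)
qed

lemma convex_Mt: "convex Mt"
  unfolding Mt_def by (intro convex_Times convex_real_interval)

lemma locally_lipschitz_compact_imp_lipschitz:
  fixes c :: "'a::metric_space \<Rightarrow> 'b::metric_space"
  assumes "compact X" and "\<forall>s\<in>X. \<exists>e>0. \<exists>L. L-lipschitz_on (X \<inter> cball s e) c"
  obtains L where "L-lipschitz_on X c"
proof -
  have "local_lipschitz {0::real} X (\<lambda>_. c)"
    using assms(2) by (fastforce simp: local_lipschitz_def Int_commute)
  then show ?thesis
    using local_lipschitz_compact_implies_lipschitz[of "{0::real}" X "\<lambda>_. c"] assms(1) that by auto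
qed

definition future_curve :: "real \<Rightarrow> real \<Rightarrow> (real \<Rightarrow> pt) \<Rightarrow> bool" where
  "future_curve a b c \<longleftrightarrow> a \<le> b \<and> c ` {a..b} \<subseteq> Mt \<and> (\<exists>L. L-lipschitz_on {a..b} c) \<and>
     (\<exists>N. negligible N \<and>
        (\<forall>s\<in>{a..b} - N. \<exists>d. (c has_vector_derivative d) (at s) \<and> d \<in> future_cone))"

lemma future_curveI:
  assumes "a \<le> b" "c ` {a..b} \<subseteq> Mt" "L-lipschitz_on {a..b} c" "negligible N"
    "\<And>s. s \<in> {a..b} - N \<Longrightarrow> \<exists>d. (c has_vector_derivative d) (at s) \<and> d \<in> future_cone"
  shows "future_curve a b c"
  using assms unfolding future_curve_def by blast

lemma future_curveE:
  assumes "future_curve a b c"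
  obtains L N where "a \<le> b" "c ` {a..b} \<subseteq> Mt" "L-lipschitz_on {a..b} c" "negligible N"
    "\<And>s. s \<in> {a..b} - N \<Longrightarrow> \<exists>d. (c has_vector_derivative d) (at s) \<and> d \<in> future_cone"
  using assms unfolding future_curve_def by blast

lemma fd_causal_curve_iff_future_curve:
  assumes "\<forall>x\<in>Mt. \<Omega> x > 0"
  shows "fd_causal_curve \<Omega> a b c \<longleftrightarrow> future_curve a b c"
proof -
  have lip: "(\<forall>s\<in>{a..b}. \<exists>e>0. \<exists>L. L-lipschitz_on ({a..b} \<inter> cball s e) c) \<longleftrightarrow>
      (\<exists>L. L-lipschitz_on {a..b} c)"
    by (meson compact_Icc inf_le1 lipschitz_on_subset locally_lipschitz_compact_imp_lipschitz
        zero_less_one)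
  have "(AE s in lebesgue. s \<in> {a..b} \<longrightarrow>
           (\<exists>d. (c has_vector_derivative d) (at s) \<and> fd_causal_vec \<Omega> (c s) d)) \<longleftrightarrow>
        (\<exists>N. negligible N \<and>
           (\<forall>s\<in>{a..b} - N. \<exists>d. (c has_vector_derivative d) (at s) \<and> d \<in> future_cone))"
    if "c ` {a..b} \<subseteq> Mt"
  proof -
    have vec: "fd_causal_vec \<Omega> (c s) d \<longleftrightarrow> d \<in> future_cone" if "s \<in> {a..b}" for s d
      using fd_causal_vec_iff_future_cone assms \<open>c ` {a..b} \<subseteq> Mt\<close> that
      by (metis image_subset_iff order_less_irrefl)
    have "(s \<in> {a..b} \<longrightarrow>
          (\<exists>d. (c has_vector_derivative d) (at s) \<and> fd_causal_vec \<Omega> (c s) d)) \<longleftrightarrow>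
        (s \<in> {a..b} \<longrightarrow> (\<exists>d. (c has_vector_derivative d) (at s) \<and> d \<in> future_cone))" for s
      by (cases "s \<in> {a..b}") (simp_all add: vec)
    then show ?thesis
      unfolding eventually_ae_filter_negligible by (simp only:) blast
  qed
  then show ?thesis
    unfolding fd_causal_curve_def future_curve_def lip by blast
qed

lemma future_curve_affine_reparam:
  assumes c: "future_curve a b c" and k: "0 < k" and ab: "a = t + k * a'" "b = t + k * b'"
  shows "future_curve a' b' (\<lambda>s. c (t + k * s))"
proof -
  obtain L N where le: "a \<le> b" and im: "c ` {a..b} \<subseteq> Mt" and L: "L-lipschitz_on {a..b} c"
    and N: "negligible N"
    and D: "\<And>s. s \<in> {a..b} - N \<Longrightarrow> \<exists>d. (c has_vector_derivative d) (at s) \<and> d \<in> future_cone"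
    using c by (rule future_curveE) blast
  have maps: "t + k * s \<in> {a..b}" if "s \<in> {a'..b'}" for s
    using that k by (auto simp: ab)
  show ?thesis
  proof (rule future_curveI)
    show "a' \<le> b'"
      using le k by (simp add: ab)
    show "(\<lambda>s. c (t + k * s)) ` {a'..b'} \<subseteq> Mt"
      using im maps by blast
    show "(L * k)-lipschitz_on {a'..b'} (\<lambda>s. c (t + k * s))"
    proof (rule lipschitz_on_compose2[where f="\<lambda>s. t + k * s" and g=c])
      show "k-lipschitz_on {a'..b'} (\<lambda>s. t + k * s)"
        using k by (intro lipschitz_onI) (auto simp: dist_real_def abs_mult right_diff_distrib[symmetric])
      show "L-lipschitz_on ((\<lambda>s. t + k * s) ` {a'..b'}) c"
        using maps by (intro lipschitz_on_subset[OF L]) auto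
    qed
    show "negligible ((\<lambda>x. (x - t) / k) ` N)"
      using N by (rule negligible_differentiable_image_negligible[OF order_refl])
        (simp add: divide_inverse)
    fix s assume s: "s \<in> {a'..b'} - (\<lambda>x. (x - t) / k) ` N"
    have "s = (t + k * s - t) / k"
      using k by simp
    then have "t + k * s \<in> {a..b} - N"
      using s maps by blast
    then obtain d where d: "(c has_vector_derivative d) (at (t + k * s))" "d \<in> future_cone"
      using D by blast
    have affine: "((\<lambda>s. t + k * s) has_vector_derivative k) (at s)"
      by (auto simp: has_real_derivative_iff_has_vector_derivative[symmetric]
          intro!: derivative_eq_intros)
    have "((\<lambda>s. c (t + k * s)) has_vector_derivative k *\<^sub>R d) (at s)"
      using vector_diff_chain_at[OF affine d(1)] by (simp add: o_def)
    then show "\<exists>d. ((\<lambda>s. c (t + k * s)) has_vector_derivative d) (at s) \<and> d \<in> future_cone"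
      using future_cone_scaleR[OF k d(2)] by blast
  qed
qed

lemma future_curve_join:
  assumes c1: "future_curve a b c1" and c2: "future_curve b e c2" and meet: "c1 b = c2 b"
  shows "future_curve a e (\<lambda>s. if s \<le> b then c1 s else c2 s)" (is "future_curve a e ?c")
proof -
  obtain L1 N1 where le1: "a \<le> b" and im1: "c1 ` {a..b} \<subseteq> Mt" and L1: "L1-lipschitz_on {a..b} c1"
    and N1: "negligible N1"
    and D1: "\<And>s. s \<in> {a..b} - N1 \<Longrightarrow> \<exists>d. (c1 has_vector_derivative d) (at s) \<and> d \<in> future_cone"
    using c1 by (rule future_curveE) blast
  obtain L2 N2 where le2: "b \<le> e" and im2: "c2 ` {b..e} \<subseteq> Mt" and L2: "L2-lipschitz_on {b..e} c2"
    and N2: "negligible N2"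
    and D2: "\<And>s. s \<in> {b..e} - N2 \<Longrightarrow> \<exists>d. (c2 has_vector_derivative d) (at s) \<and> d \<in> future_cone"
    using c2 by (rule future_curveE) blast
  show ?thesis
  proof (rule future_curveI)
    show "a \<le> e" using le1 le2 by simp
    show "?c ` {a..e} \<subseteq> Mt" using im1 im2 by auto
    show "(max L1 L2)-lipschitz_on {a..e} ?c"
      by (rule lipschitz_on_concat_max[OF L1 L2 meet])
    show "negligible (N1 \<union> N2 \<union> {b})"
      using N1 N2 by auto
    fix s assume s: "s \<in> {a..e} - (N1 \<union> N2 \<union> {b})"
    show "\<exists>d. (?c has_vector_derivative d) (at s) \<and> d \<in> future_cone"
    proof (cases "s < b")
      case True
      then have "s \<in> {a..b} - N1" using s by auto
      then obtain d where d: "(c1 has_vector_derivative d) (at s)" "d \<in> future_cone"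
        using D1 by blast
      have "(?c has_vector_derivative d) (at s)"
        using d(1) by (rule has_vector_derivative_transform_within_open[where S="{..<b}"])
          (use True in auto)
      with d(2) show ?thesis by blast
    next
      case False
      then have "s \<in> {b..e} - N2" using s by auto
      then obtain d where d: "(c2 has_vector_derivative d) (at s)" "d \<in> future_cone"
        using D2 by blast
      have "(?c has_vector_derivative d) (at s)"
        using d(1) by (rule has_vector_derivative_transform_within_open[where S="{b<..}"])
          (use False s in auto)
      with d(2) show ?thesis by blast
    qed
  qed
qed

lemma future_curve_convex_combination:
  assumes c1: "future_curve a b c1" and c2: "future_curve a b c2" and l: "0 \<le> l" "l \<le> 1"
  shows "future_curve a b (\<lambda>s. (1 - l) *\<^sub>R c1 s + l *\<^sub>R c2 s)" (is "future_curve a b ?c")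
proof -
  obtain L1 N1 where le: "a \<le> b" and im1: "c1 ` {a..b} \<subseteq> Mt" and L1: "L1-lipschitz_on {a..b} c1"
    and N1: "negligible N1"
    and D1: "\<And>s. s \<in> {a..b} - N1 \<Longrightarrow> \<exists>d. (c1 has_vector_derivative d) (at s) \<and> d \<in> future_cone"
    using c1 by (rule future_curveE) blast
  obtain L2 N2 where im2: "c2 ` {a..b} \<subseteq> Mt" and L2: "L2-lipschitz_on {a..b} c2"
    and N2: "negligible N2"
    and D2: "\<And>s. s \<in> {a..b} - N2 \<Longrightarrow> \<exists>d. (c2 has_vector_derivative d) (at s) \<and> d \<in> future_cone"
    using c2 by (rule future_curveE) blast
  show ?thesis
  proof (rule future_curveI)
    show "a \<le> b" by fact
    show "?c ` {a..b} \<subseteq> Mt"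
    proof (rule image_subsetI)
      fix s assume "s \<in> {a..b}"
      then have "c1 s \<in> Mt" "c2 s \<in> Mt" using im1 im2 by auto
      then show "?c s \<in> Mt" using l convexD[OF convex_Mt] by simp
    qed
    show "(\<bar>1 - l\<bar> * L1 + \<bar>l\<bar> * L2)-lipschitz_on {a..b} ?c"
      by (intro lipschitz_on_add lipschitz_on_cmult L1 L2)
    show "negligible (N1 \<union> N2)"
      using N1 N2 by auto
    fix s assume "s \<in> {a..b} - (N1 \<union> N2)"
    then obtain d1 d2 where d: "(c1 has_vector_derivative d1) (at s)" "d1 \<in> future_cone"
      "(c2 has_vector_derivative d2) (at s)" "d2 \<in> future_cone"
      using D1 D2 by blast
    have "(?c has_vector_derivative (1 - l) *\<^sub>R d1 + l *\<^sub>R d2) (at s)"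
      using d(1,3) by (auto intro!: derivative_eq_intros)
    moreover have "(1 - l) *\<^sub>R d1 + l *\<^sub>R d2 \<in> future_cone"
      using d(2,4) l convexD[OF convex_future_cone] by simp
    ultimately show "\<exists>d. (?c has_vector_derivative d) (at s) \<and> d \<in> future_cone" by blast
  qed
qed

lemma causal_homotopy_straight_line:
  assumes pos: "\<forall>x\<in>Mt. \<Omega> x > 0" and \<gamma>: "fd_causal_curve \<Omega> 0 1 \<gamma>"
    and \<sigma>: "fd_causal_curve \<Omega> 0 1 \<sigma>" and ends: "\<sigma> 0 = \<gamma> 0" "\<sigma> 1 = \<gamma> 1"
  shows "causal_homotopy \<Omega> \<gamma> (\<lambda>s l. (1 - l) *\<^sub>R \<gamma> s + l *\<^sub>R \<sigma> s)"
proof -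
  have \<gamma>': "future_curve 0 1 \<gamma>" and \<sigma>': "future_curve 0 1 \<sigma>"
    using \<gamma> \<sigma> fd_causal_curve_iff_future_curve[OF pos] by auto
  have curves: "future_curve 0 1 (\<lambda>s. (1 - l) *\<^sub>R \<gamma> s + l *\<^sub>R \<sigma> s)" if "l \<in> {0..1}" for l
    using future_curve_convex_combination[OF \<gamma>' \<sigma>'] that by simp
  have "continuous_on {0..1} \<gamma>" "continuous_on {0..1} \<sigma>"
    using \<gamma>' \<sigma>' by (metis future_curveE lipschitz_on_continuous_on)+
  then have "continuous_on ({0..1} \<times> {0..1}) (\<lambda>(s, l). (1 - l) *\<^sub>R \<gamma> s + l *\<^sub>R \<sigma> s)"
    unfolding case_prod_unfold
    by (intro continuous_intros continuous_on_compose2[of "{0..1}" _ _ fst]) auto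
  moreover have "(1 - l) *\<^sub>R \<gamma> s + l *\<^sub>R \<sigma> s \<in> Mt" if "s \<in> {0..1}" "l \<in> {0..1}" for s l
    using curves[OF that(2)] that(1) by (elim future_curveE) blast
  moreover have "fd_causal_curve \<Omega> 0 1 (\<lambda>s. (1 - l) *\<^sub>R \<gamma> s + l *\<^sub>R \<sigma> s)" if "l \<in> {0..1}" for l
    using curves[OF that] fd_causal_curve_iff_future_curve[OF pos] by blast
  ultimately show ?thesis
    unfolding causal_homotopy_def using ends by (simp add: algebra_simps)
qed

lemma fd_causal_curve_through_point:
  assumes pos: "\<forall>x\<in>Mt. \<Omega> x > 0" and \<gamma>: "fd_causal_curve \<Omega> 0 1 \<gamma>"
    and p: "p \<in> Jplus \<Omega> (\<gamma> 0) \<inter> Jminus \<Omega> (\<gamma> 1)"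
  obtains \<sigma> where "fd_causal_curve \<Omega> 0 1 \<sigma>" "\<sigma> 0 = \<gamma> 0" "\<sigma> 1 = \<gamma> 1" "p \<in> \<sigma> ` {0..1}"
proof -
  obtain a1 b1 c1 a2 b2 c2 where
    c1: "future_curve a1 b1 c1" "c1 a1 = \<gamma> 0" "c1 b1 = p" and
    c2: "future_curve a2 b2 c2" "c2 a2 = p" "c2 b2 = \<gamma> 1"
    using p fd_causal_curve_iff_future_curve[OF pos] unfolding Jplus_def Jminus_def by blast
  have "a1 \<le> b1" "a2 \<le> b2"
    using c1(1) c2(1) unfolding future_curve_def by auto
  then consider "a1 = b1" | "a2 = b2" | "a1 < b1" "a2 < b2"
    by linarith
  then show ?thesis
  proof cases
    case 1
    then have "p = \<gamma> 0" using c1 by simp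
    then show ?thesis by (intro that[OF \<gamma> refl refl]) auto
  next
    case 2
    then have "p = \<gamma> 1" using c2 by simp
    then show ?thesis by (intro that[OF \<gamma> refl refl]) auto
  next
    case 3
    define t2 where "t2 = a2 - (b2 - a2)"
    have ends: "a1 + 2 * (b1 - a1) * 0 = a1" "a1 + 2 * (b1 - a1) * (1/2) = b1"
      "t2 + 2 * (b2 - a2) * (1/2) = a2" "t2 + 2 * (b2 - a2) * 1 = b2"
      by (simp_all add: t2_def algebra_simps)
    have "future_curve 0 (1/2) (\<lambda>s. c1 (a1 + 2 * (b1 - a1) * s))"
      by (rule future_curve_affine_reparam[OF c1(1)]) (use 3 in \<open>auto simp: field_simps\<close>)
    moreover have "future_curve (1/2) 1 (\<lambda>s. c2 (t2 + 2 * (b2 - a2) * s))"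
      by (rule future_curve_affine_reparam[OF c2(1)]) (use 3 in \<open>auto simp: t2_def field_simps\<close>)
    ultimately have "future_curve 0 1 (\<lambda>s. if s \<le> 1/2 then c1 (a1 + 2 * (b1 - a1) * s)
        else c2 (t2 + 2 * (b2 - a2) * s))" (is "future_curve 0 1 ?\<sigma>")
      by (rule future_curve_join) (simp only: ends c1(3) c2(2))
    moreover have "?\<sigma> 0 = \<gamma> 0" "?\<sigma> 1 = \<gamma> 1" and mid: "?\<sigma> (1/2) = p"
      using ends c1(2,3) c2(3) by (simp_all only: if_P if_not_P)
    moreover have "p \<in> ?\<sigma> ` {0..1}"
      using mid by (intro image_eqI[where x="1/2"]) auto
    ultimately show ?thesis
      using fd_causal_curve_iff_future_curve[OF pos] that by blast
  qed
qed

theorem lemma2p10: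
  fixes \<Omega> :: "pt \<Rightarrow> real" and \<gamma> :: "real \<Rightarrow> pt" and p :: pt
  assumes "smooth2_on Mt \<Omega>" and "\<forall>x\<in>Mt. \<Omega> x > 0"
    and "fd_causal_curve \<Omega> 0 1 \<gamma>"
    and "p \<in> Jplus \<Omega> (\<gamma> 0) \<inter> Jminus \<Omega> (\<gamma> 1)"
  shows "\<exists>\<Gamma>. causal_homotopy \<Omega> \<gamma> \<Gamma> \<and> (\<exists>s\<in>{0..1}. \<exists>l\<in>{0..1}. p = \<Gamma> s l)"
proof -
  obtain \<sigma> s where \<sigma>: "fd_causal_curve \<Omega> 0 1 \<sigma>" "\<sigma> 0 = \<gamma> 0" "\<sigma> 1 = \<gamma> 1"
    and s: "s \<in> {0..1}" "p = \<sigma> s"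
    using fd_causal_curve_through_point[OF assms(2-4)] by blast
  let ?\<Gamma> = "\<lambda>s l. (1 - l) *\<^sub>R \<gamma> s + l *\<^sub>R \<sigma> s"
  have "causal_homotopy \<Omega> \<gamma> ?\<Gamma>"
    using causal_homotopy_straight_line[OF assms(2,3) \<sigma>] .
  moreover have "\<exists>s\<in>{0..1}. \<exists>l\<in>{0..1}. p = ?\<Gamma> s l"
    using s by (intro bexI[of _ s] bexI[of _ 1]) auto
  ultimately show ?thesis
    by blast
qed

end
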